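(* Let $N\in\mathbb N$ and let $f\in R_J(N)$ be nonzero. Then every extreme point of $\nu_J(f)$ lies in $\operatorname{supp}(f)$, and $$\nu_J(f)=\operatorname{Closure}_{\mathbb R^2}\bigl(\operatorname{conv}(\operatorname{supp}(f);\vec A)\bigr)=\operatorname{conv}(\operatorname{supp}(f);\vec A).$$
   Context: $R(N)=\mathbb C[\zeta^{1/N},\zeta^{-1/N}]((q^{1/N}))$ is the ring of formal series $f=\sum_{n,r\in\frac1N\mathbb Z}c(n,r)q^n\zeta^r$ such that for each $n$ only finitely many $r$ have $c(n,r)\ne0$ and $n$ is bounded below on the support $\operatorname{supp}(f)=\{(n,r): c(n,r)\neq0\}$. $R_J(N)$ is the set of $f\in R(N)$ for which there exist $a>0$ and $b,c\in\mathbb R$ with $\operatorname{supp}(f)\subseteq\{(n,r)\in\mathbb R^2: n\ge ar^2+br+c\}$. Let $\vec A=\{(1,0)\}\subset\mathbb R^2$ (the direction of the ray $[0,\infty)\times\{0\}$). For $P\subseteq\mathbb R^2$, $\operatorname{conv}(P;\vec A)=\operatorname{conv}(P)+[0,\infty)\times\{0\}$, i.e. all $\sum_i\alpha_ip_i+\beta(1,0)$ with $p_i\in P$, $\alpha_i\ge0$, $\sum\alpha_i=1$, $\beta\ge0$ (finite sums). The Jacobi valuation is $\nu_J(f)=\operatorname{Closure}_{\mathbb R^2}(\operatorname{conv}(\operatorname{supp}(f);\vec A))$. An extreme point of a convex set $C$ is a point of $C$ not in the relative interior of any line segment contained in $C$. *)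

theory Defs
  imports "HOL-Analysis.Analysis"
begin

text \<open>A formal series f = sum c(n,r) q^n zeta^r is represented by its coefficient
  function on R^2: f (n, r) = c(n,r).\<close>

definition supp :: "(real \<times> real \<Rightarrow> complex) \<Rightarrow> (real \<times> real) set" where
  "supp f = {p. f p \<noteq> 0}"

text \<open>Membership in R(N) = C[zeta^(1/N), zeta^(-1/N)]((q^(1/N))).\<close>
definition in_R :: "nat \<Rightarrow> (real \<times> real \<Rightarrow> complex) \<Rightarrow> bool" where
  "in_R N f \<longleftrightarrow> N > 0
     \<and> (\<forall>p \<in> supp f. \<exists>m k :: int. p = (real_of_int m / real N, real_of_int k / real N))
     \<and> (\<forall>n. finite {r. f (n, r) \<noteq> 0})
     \<and> bdd_below (fst ` supp f)"

definition in_RJ :: "nat \<Rightarrow> (real \<times> real \<Rightarrow> complex) \<Rightarrow> bool" where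
  "in_RJ N f \<longleftrightarrow> in_R N f
     \<and> (\<exists>a > 0. \<exists>b c. supp f \<subseteq> {(n, r). n \<ge> a * r\<^sup>2 + b * r + c})"

text \<open>conv(P; A) with A = {(1,0)}.\<close>
definition convA :: "(real \<times> real) set \<Rightarrow> (real \<times> real) set" where
  "convA P = {x + (\<beta>, 0) | x \<beta>. x \<in> convex hull P \<and> \<beta> \<ge> 0}"

definition nuJ :: "(real \<times> real \<Rightarrow> complex) \<Rightarrow> (real \<times> real) set" where
  "nuJ f = closure (convA (supp f))"

end

theory Submission
  imports Defs
begin

text \<open>
  Let S = supp f, which lies on a lattice and above a parabola n \<ge> a r^2 + b r + c with a > 0.
  The heart of the proof is that below any line n = m only finitely many points of S matter:
  there is a finite T \<subseteq> S with conv(S; A) \<inter> {n \<le> m} \<subseteq> conv(T; A). As conv(T; A) is a polytope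
  plus a ray, hence closed, conv(S; A) is closed.

  To find T, separate a point z \<notin> conv(T; A) from conv(T; A) by a functional u; u cannot decrease
  along the ray, so some p \<in> S lies on the side of z. This p is traded for a point of T that is
  no farther from z along u: in a strip |r| \<le> R for a point of S with the same r and smaller n,
  and far out on the parabola for one fixed point q of S on the same side of the strip, because
  far out the parabola lies inside every cone n \<ge> m + \<sigma> |r|.

  An extreme point of conv(S; A) has no ray component, so it is an extreme point of conv S and
  therefore lies in S.
\<close>

lemma convA_eq_sums: "convA P = (\<Union>x\<in>convex hull P. \<Union>y\<in>{0..} \<times> {0}. {x + y})"
proof (intro equalityI subsetI)
  fix z assume "z \<in> convA P"
  then obtain x \<beta> where "z = x + (\<beta>, 0)" "x \<in> convex hull P" "0 \<le> \<beta>"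
    unfolding convA_def by blast
  then show "z \<in> (\<Union>x\<in>convex hull P. \<Union>y\<in>{0..} \<times> {0}. {x + y})"
    by (intro UN_I[of x] UN_I[of "(\<beta>, 0)"]) auto
next
  fix z assume "z \<in> (\<Union>x\<in>convex hull P. \<Union>y\<in>{0..} \<times> {0}. {x + y})"
  then obtain x \<beta> where "z = x + (\<beta>, 0)" "x \<in> convex hull P" "0 \<le> \<beta>"
    by auto
  then show "z \<in> convA P"
    unfolding convA_def by blast
qed

lemma convex_convA: "convex (convA P)"
  unfolding convA_eq_sums by (intro convex_sums convex_convex_hull convex_Times) auto

lemma closed_convA_finite: "finite P \<Longrightarrow> closed (convA P)"
  unfolding convA_eq_sums
  by (intro compact_closed_sums compact_convex_hull finite_imp_compact closed_Times) auto

lemma convex_hull_subset_convA: "convex hull P \<subseteq> convA P"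
proof
  fix x assume "x \<in> convex hull P"
  moreover have "x = x + (0, 0)"
    by (simp add: zero_prod_def[symmetric])
  ultimately show "x \<in> convA P"
    unfolding convA_def by blast
qed

lemma subset_convA: "P \<subseteq> convA P"
  using hull_subset[of P convex] convex_hull_subset_convA by blast

lemma convA_mono: "P \<subseteq> Q \<Longrightarrow> convA P \<subseteq> convA Q"
  unfolding convA_def using hull_mono[of P Q convex] by blast

lemma convA_shift:
  assumes "x \<in> convA P" and "0 \<le> \<beta>"
  shows "x + (\<beta>, 0) \<in> convA P"
proof -
  obtain y \<gamma> where "x = y + (\<gamma>, 0)" "y \<in> convex hull P" "0 \<le> \<gamma>"
    using assms(1) unfolding convA_def by blast
  then show ?thesis
    unfolding convA_def using assms(2) by (intro CollectI exI[of _ y] exI[of _ "\<gamma> + \<beta>"]) auto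
qed

lemma convA_least:
  assumes "convex C" and "P \<subseteq> C" and "\<And>x \<beta>. x \<in> C \<Longrightarrow> 0 \<le> \<beta> \<Longrightarrow> x + (\<beta>, 0) \<in> C"
  shows "convA P \<subseteq> C"
proof -
  have "convex hull P \<subseteq> C"
    using assms(1,2) by (simp add: hull_minimal)
  then show ?thesis
    using assms(3) unfolding convA_def by blast
qed

lemma extreme_point_of_convA:
  assumes "x extreme_point_of convA P"
  shows "x \<in> P"
proof -
  obtain y \<beta> where y: "x = y + (\<beta>, 0)" "y \<in> convex hull P" "0 \<le> \<beta>"
    using assms unfolding extreme_point_of_def convA_def by blast
  have "\<beta> = 0"
  proof (rule ccontr)
    assume "\<beta> \<noteq> 0"
    with y(3) have "0 < \<beta>" by simp
    have yP: "y \<in> convA P"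
      using y(2) convex_hull_subset_convA by blast
    have "x = midpoint (y + (\<beta> / 2, 0)) (y + (3 * \<beta> / 2, 0))"
      unfolding y(1) midpoint_def by (simp add: prod_eq_iff)
    moreover have "y + (\<beta> / 2, 0) \<noteq> y + (3 * \<beta> / 2, 0)"
      using \<open>0 < \<beta>\<close> by simp
    ultimately have "x \<in> open_segment (y + (\<beta> / 2, 0)) (y + (3 * \<beta> / 2, 0))"
      by simp
    moreover have "y + (\<beta> / 2, 0) \<in> convA P" "y + (3 * \<beta> / 2, 0) \<in> convA P"
      using convA_shift[OF yP] \<open>0 < \<beta>\<close> by simp_all
    ultimately show False
      using assms unfolding extreme_point_of_def by blast
  qed
  with y have "x \<in> convex hull P"
    by (simp add: zero_prod_def[symmetric])
  then have "x extreme_point_of convex hull P"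
    using assms convex_hull_subset_convA unfolding extreme_point_of_def by blast
  then show ?thesis
    by (rule extreme_point_of_convex_hull)
qed

lemma inner_real_pair: "inner u p = fst u * fst p + snd u * snd p"
  for u p :: "real \<times> real"
  by (simp add: inner_prod_def)

lemma inner_convA_shift: "inner u (x + (\<beta>, 0)) = inner u x + fst u * \<beta>"
  for u x :: "real \<times> real"
  by (simp add: inner_real_pair algebra_simps)

lemma fst_nonneg_if_bounded_below_convA:
  assumes "t \<in> convA P" and bdd: "\<And>x. x \<in> convA P \<Longrightarrow> d < inner u x"
  shows "0 \<le> fst u"
proof (rule ccontr)
  assume neg: "\<not> 0 \<le> fst u"
  define \<beta> where "\<beta> = (inner u t - d) / - fst u"
  have "d < inner u t"
    using bdd[OF assms(1)] .
  with neg have "0 \<le> \<beta>" and "fst u * \<beta> = d - inner u t"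
    unfolding \<beta>_def by (simp_all add: field_simps)
  moreover from this(1) have "d < inner u (t + (\<beta>, 0))"
    by (intro bdd convA_shift assms(1))
  ultimately show False
    by (simp add: inner_convA_shift)
qed

lemma ex_inner_le_if_mem_convA:
  assumes "0 \<le> fst u" and "z \<in> convA P"
  shows "\<exists>p\<in>P. inner u p \<le> inner u z"
proof (rule ccontr)
  assume none: "\<not> ?thesis"
  have "convA P \<subseteq> {x. inner u z < inner u x}"
  proof (rule convA_least[OF convex_halfspace_gt])
    show "P \<subseteq> {x. inner u z < inner u x}"
      using none by (auto simp: not_le)
    show "x + (\<beta>, 0) \<in> {x. inner u z < inner u x}"
      if "x \<in> {x. inner u z < inner u x}" and "0 \<le> \<beta>" for x \<beta>
      using that inner_convA_shift[of u x \<beta>] mult_nonneg_nonneg[OF assms(1) that(2)] by simp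
  qed
  with assms(2) show False by auto
qed

definition witnessed_by :: "(real \<times> real) set \<Rightarrow> real \<times> real \<Rightarrow> real \<times> real \<Rightarrow> bool" where
  "witnessed_by T z p \<longleftrightarrow>
     (\<forall>u. 0 \<le> fst u \<longrightarrow> inner u p \<le> inner u z \<longrightarrow> (\<exists>y\<in>T. inner u y \<le> inner u z))"

lemma witnessed_by_mono: "witnessed_by T z p \<Longrightarrow> T \<subseteq> T' \<Longrightarrow> witnessed_by T' z p"
  unfolding witnessed_by_def by blast

lemma witnessed_by_shifted:
  assumes "y \<in> T" and "fst y \<le> fst p" and "snd y = snd p"
  shows "witnessed_by T z p"
  unfolding witnessed_by_def
proof (intro allI impI)
  fix u :: "real \<times> real" assume "0 \<le> fst u" and "inner u p \<le> inner u z"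
  moreover have "fst u * fst y \<le> fst u * fst p"
    using assms(2) \<open>0 \<le> fst u\<close> by (rule mult_left_mono)
  ultimately show "\<exists>y\<in>T. inner u y \<le> inner u z"
    using assms(1,3) by (intro bexI[of _ y]) (auto simp: inner_real_pair)
qed

lemma mem_convA_if_witnessed:
  fixes T P :: "(real \<times> real) set"
  assumes "finite T" and "z \<in> convA P" and witnessed: "\<And>p. p \<in> P \<Longrightarrow> witnessed_by T z p"
  shows "z \<in> convA T"
proof (rule ccontr)
  note witness = witnessed[unfolded witnessed_by_def, rule_format]
  assume "z \<notin> convA T"
  then obtain u d where uz: "inner u z < d" and uT: "\<And>x. x \<in> convA T \<Longrightarrow> d < inner u x"
    using separating_hyperplane_closed_point[OF convex_convA closed_convA_finite[OF assms(1)]]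
    by blast
  obtain p0 where "p0 \<in> P"
    using ex_inner_le_if_mem_convA[of 0 z P] assms(2) by auto
  then obtain t where "t \<in> T"
    using witness[of p0 0] by auto
  then have "0 \<le> fst u"
    using subset_convA uT by (blast intro: fst_nonneg_if_bounded_below_convA)
  then obtain y where "y \<in> T" "inner u y \<le> inner u z"
    using witness ex_inner_le_if_mem_convA[OF _ assms(2)] by blast
  with uz uT[of y] subset_convA[of T] show False by auto
qed

lemma quadratic_lower_bound:
  fixes a b c r :: real
  assumes "0 < a"
  shows "c - b\<^sup>2 / (4 * a) \<le> a * r\<^sup>2 + b * r + c"
proof -
  have "a * r\<^sup>2 + b * r + b\<^sup>2 / (4 * a) = (2 * a * r + b)\<^sup>2 / (4 * a)"
    using assms by (simp add: field_simps power2_eq_square)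
  moreover have "0 \<le> (2 * a * r + b)\<^sup>2 / (4 * a)"
    using assms by simp
  ultimately show ?thesis by linarith
qed

lemma quadratic_dominates_linear:
  fixes a b c A D :: real
  assumes "0 < a"
  obtains R where "\<And>r. a * r\<^sup>2 + b * r + c \<le> A * \<bar>r\<bar> + D \<Longrightarrow> \<bar>r\<bar> \<le> R"
proof
  define K where "K = \<bar>b\<bar> + \<bar>A\<bar> + \<bar>D - c\<bar>"
  fix r assume le: "a * r\<^sup>2 + b * r + c \<le> A * \<bar>r\<bar> + D"
  have "a * \<bar>r\<bar> * \<bar>r\<bar> = a * r\<^sup>2" "- (b * r) \<le> \<bar>b\<bar> * \<bar>r\<bar>" "A * \<bar>r\<bar> \<le> \<bar>A\<bar> * \<bar>r\<bar>" "D - c \<le> \<bar>D - c\<bar>"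
    by (simp_all add: power2_eq_square abs_mult[symmetric] mult_right_mono)
  with le have "a * \<bar>r\<bar> * \<bar>r\<bar> \<le> (\<bar>b\<bar> + \<bar>A\<bar>) * \<bar>r\<bar> + \<bar>D - c\<bar>"
    unfolding distrib_right by linarith
  also have "\<dots> \<le> (\<bar>b\<bar> + \<bar>A\<bar>) * max 1 \<bar>r\<bar> + \<bar>D - c\<bar> * max 1 \<bar>r\<bar>"
    by (intro add_mono mult_left_mono) (auto simp: mult_le_cancel_left1)
  also have "\<dots> = K * max 1 \<bar>r\<bar>"
    unfolding K_def by (simp add: algebra_simps)
  finally have "a * \<bar>r\<bar> * \<bar>r\<bar> \<le> K * max 1 \<bar>r\<bar>" .
  then show "\<bar>r\<bar> \<le> K / a + 1"
  proof (cases "\<bar>r\<bar> \<le> 1")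
    case True
    moreover have "0 \<le> K / a"
      unfolding K_def using assms by simp
    ultimately show ?thesis by linarith
  next
    case False
    with \<open>a * \<bar>r\<bar> * \<bar>r\<bar> \<le> K * max 1 \<bar>r\<bar>\<close> have "a * \<bar>r\<bar> * \<bar>r\<bar> \<le> K * \<bar>r\<bar>"
      by (simp add: max_def)
    then have "a * \<bar>r\<bar> \<le> K"
      by (rule mult_right_le_imp_le) (use False in simp)
    then have "\<bar>r\<bar> \<le> K / a"
      using assms by (simp add: pos_le_divide_eq ac_simps)
    then show ?thesis by simp
  qed
qed

lemma convex_on_quadratic:
  fixes a b c :: real
  assumes "0 \<le> a"
  shows "convex_on UNIV (\<lambda>r. a * r\<^sup>2 + b * r + c)"
proof (rule f''_ge0_imp_convex)
  show "((\<lambda>r. a * r\<^sup>2 + b * r + c) has_real_derivative 2 * a * r + b) (at r)" for r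
    by (rule derivative_eq_intros | simp)+
  show "((\<lambda>r. 2 * a * r + b) has_real_derivative 2 * a) (at r)" for r
    by (rule derivative_eq_intros | simp)+
qed (use assms in auto)

lemma convex_above_graph:
  fixes g :: "real \<Rightarrow> real"
  assumes "convex_on UNIV g"
  shows "convex {p :: real \<times> real. g (snd p) \<le> fst p}"
proof -
  have "{p :: real \<times> real. g (snd p) \<le> fst p} = prod.swap ` epigraph UNIV g"
    by (force simp: epigraph_def)
  moreover have "linear (prod.swap :: real \<times> real \<Rightarrow> _)"
    by (auto simp: linear_iff)
  ultimately show ?thesis
    using convex_linear_image[OF _ convex_epigraphI[OF assms]] by metis
qed

lemma inner_transfer_across_slope:
  fixes u p q z :: "real \<times> real" and s \<sigma> :: real
  assumes s: "s \<in> {-1, 1}" and u: "0 \<le> fst u" "inner u p \<le> inner u z"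
    and p: "s * snd z < s * snd p" "\<sigma> * (s * snd p - s * snd z) \<le> fst p - fst z"
    and q: "s * snd z < s * snd q" "fst q - fst z \<le> \<sigma> * (s * snd q - s * snd z)"
  shows "inner u q \<le> inner u z"
proof -
  define v where "v = fst u * \<sigma> + s * snd u"
  have diff: "inner u x - inner u z = fst u * (fst x - fst z) + s * snd u * (s * snd x - s * snd z)" for x
    using s by (auto simp: inner_real_pair algebra_simps)
  have "v * (s * snd p - s * snd z) \<le> 0"
    using u(2) diff[of p] mult_left_mono[OF p(2) u(1)] unfolding v_def by (simp add: algebra_simps)
  then have "v \<le> 0"
    using p(1) by (simp add: mult_le_0_iff)
  then have "v * (s * snd q - s * snd z) \<le> 0"
    using q(1) by (simp add: mult_le_0_iff)
  moreover have "fst u * (fst q - fst z) \<le> fst u * (\<sigma> * (s * snd q - s * snd z))"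
    using q(2) u(1) by (rule mult_left_mono)
  ultimately show ?thesis
    using diff[of q] unfolding v_def by (simp add: algebra_simps)
qed

lemma finite_bounded_lattice:
  fixes N :: nat
  assumes "0 < N"
  shows "finite {x. (\<exists>k::int. x = k / real N) \<and> \<bar>x\<bar> \<le> B}"
proof -
  define K where "K = \<lceil>B * real N\<rceil>"
  have "{x. (\<exists>k::int. x = k / real N) \<and> \<bar>x\<bar> \<le> B} \<subseteq> (\<lambda>k. real_of_int k / real N) ` {-K..K}"
  proof
    fix x assume "x \<in> {x. (\<exists>k::int. x = k / real N) \<and> \<bar>x\<bar> \<le> B}"
    then obtain k :: int where k: "x = k / real N" "\<bar>x\<bar> \<le> B"
      by blast
    then have "\<bar>real_of_int k\<bar> \<le> B * real N"
      using assms by (simp add: divide_le_eq)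
    then have "\<bar>k\<bar> \<le> K"
      unfolding K_def by linarith
    then show "x \<in> (\<lambda>k. real_of_int k / real N) ` {-K..K}"
      using k(1) by (intro image_eqI[of _ _ k]) auto
  qed
  then show ?thesis
    by (rule finite_subset) simp
qed

locale parabolic_support =
  fixes S :: "(real \<times> real) set" and a b c :: real
  assumes a_pos: "0 < a"
    and above_parabola: "\<And>p. p \<in> S \<Longrightarrow> a * (snd p)\<^sup>2 + b * snd p + c \<le> fst p"
    and finite_fst_bounded: "\<And>B. finite {n \<in> fst ` S. \<bar>n\<bar> \<le> B}"
    and finite_snd_bounded: "\<And>B. finite {r \<in> snd ` S. \<bar>r\<bar> \<le> B}"
begin

lemma convA_above_parabola:
  assumes "z \<in> convA S"
  shows "a * (snd z)\<^sup>2 + b * snd z + c \<le> fst z"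
proof -
  have "convA S \<subseteq> {p. a * (snd p)\<^sup>2 + b * snd p + c \<le> fst p}"
    using above_parabola
    by (intro convA_least convex_above_graph convex_on_quadratic) (auto simp: less_imp_le[OF a_pos])
  with assms show ?thesis by blast
qed

lemma convA_fst_lower_bound:
  assumes "z \<in> convA S"
  shows "c - b\<^sup>2 / (4 * a) \<le> fst z"
  using quadratic_lower_bound[OF a_pos, of c b "snd z"] convA_above_parabola[OF assms] by linarith

lemma convA_snd_bounded:
  obtains R where "\<And>z. z \<in> convA S \<Longrightarrow> fst z \<le> m \<Longrightarrow> \<bar>snd z\<bar> \<le> R"
proof -
  obtain R where "\<And>r. a * r\<^sup>2 + b * r + c \<le> 0 * \<bar>r\<bar> + m \<Longrightarrow> \<bar>r\<bar> \<le> R"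
    using quadratic_dominates_linear[OF a_pos] by blast
  then show thesis
    using that convA_above_parabola by force
qed

lemma far_points_beyond_cone:
  assumes "0 \<le> \<sigma>"
  obtains M where "\<And>p. p \<in> S \<Longrightarrow> M < fst p \<Longrightarrow> m + \<sigma> * (\<bar>snd p\<bar> + R) \<le> fst p"
proof -
  obtain Q where Q: "\<And>r. a * r\<^sup>2 + b * r + c \<le> \<sigma> * \<bar>r\<bar> + (m + \<sigma> * R) \<Longrightarrow> \<bar>r\<bar> \<le> Q"
    using quadratic_dominates_linear[OF a_pos] by blast
  show thesis
  proof (rule that)
    fix p assume p: "p \<in> S" "m + \<sigma> * (Q + R) < fst p"
    show "m + \<sigma> * (\<bar>snd p\<bar> + R) \<le> fst p"
    proof (rule ccontr)
      assume "\<not> ?thesis"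
      with above_parabola[OF p(1)] have "\<bar>snd p\<bar> \<le> Q"
        by (intro Q) (simp add: algebra_simps)
      then have "\<sigma> * \<bar>snd p\<bar> \<le> \<sigma> * Q"
        using assms by (rule mult_left_mono)
      with p(2) \<open>\<not> ?thesis\<close> show False
        by (simp add: algebra_simps)
    qed
  qed
qed

lemma finite_sublevel: "finite {p \<in> S. fst p \<le> M}"
proof -
  obtain R where R: "\<And>z. z \<in> convA S \<Longrightarrow> fst z \<le> M \<Longrightarrow> \<bar>snd z\<bar> \<le> R"
    using convA_snd_bounded by blast
  define B where "B = max (max \<bar>c - b\<^sup>2 / (4 * a)\<bar> \<bar>M\<bar>) R"
  have "{p \<in> S. fst p \<le> M} \<subseteq> {n \<in> fst ` S. \<bar>n\<bar> \<le> B} \<times> {r \<in> snd ` S. \<bar>r\<bar> \<le> B}"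
  proof
    fix p assume p: "p \<in> {p \<in> S. fst p \<le> M}"
    then have "p \<in> convA S"
      using subset_convA by blast
    then have "\<bar>fst p\<bar> \<le> B" "\<bar>snd p\<bar> \<le> B"
      using R[of p] convA_fst_lower_bound[of p] p unfolding B_def by auto
    with p show "p \<in> {n \<in> fst ` S. \<bar>n\<bar> \<le> B} \<times> {r \<in> snd ` S. \<bar>r\<bar> \<le> B}"
      by (simp add: mem_Times_iff)
  qed
  then show ?thesis
    by (rule finite_subset) (intro finite_cartesian_product finite_fst_bounded finite_snd_bounded)
qed

lemma strip_witnessed:
  obtains M where "\<And>z p. p \<in> S \<Longrightarrow> \<bar>snd p\<bar> \<le> R \<Longrightarrow> M < fst p \<Longrightarrow> witnessed_by {y \<in> S. fst y \<le> M} z p"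
proof -
  define V where "V = {r \<in> snd ` S. \<bar>r\<bar> \<le> R}"
  have "finite V"
    unfolding V_def by (rule finite_snd_bounded)
  have "\<forall>r\<in>V. \<exists>n. (n, r) \<in> S"
    unfolding V_def by force
  then obtain g where g: "\<And>r. r \<in> V \<Longrightarrow> (g r, r) \<in> S"
    by metis
  show thesis
  proof (rule that)
    fix z p assume p: "p \<in> S" "\<bar>snd p\<bar> \<le> R" "Max (g ` V) < fst p"
    then have V: "snd p \<in> V"
      unfolding V_def by blast
    then have "g (snd p) \<le> Max (g ` V)"
      using \<open>finite V\<close> by simp
    with g[OF V] p(3) show "witnessed_by {y \<in> S. fst y \<le> Max (g ` V)} z p"
      by (intro witnessed_by_shifted[of "(g (snd p), snd p)"]) auto
  qed
qed

text \<open>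
  The sign s selects an end of the parabola. The slope \<sigma> is chosen so that the fixed point q
  lies on the left of the line of slope \<sigma> through every admissible z, while all far points of S
  lie on its right.
\<close>

lemma far_side_witnessed:
  assumes s: "s \<in> {-1, 1}"
    and R: "\<And>z. z \<in> convA S \<Longrightarrow> fst z \<le> m \<Longrightarrow> \<bar>snd z\<bar> \<le> R"
  obtains M where "\<And>z p. z \<in> convA S \<Longrightarrow> fst z \<le> m \<Longrightarrow> p \<in> S \<Longrightarrow> R < s * snd p \<Longrightarrow> M < fst p \<Longrightarrow>
    witnessed_by {y \<in> S. fst y \<le> M} z p"
proof (cases "\<exists>q\<in>S. R < s * snd q")
  case False
  then show thesis
    using that[of 0] by blast
next
  case True
  then obtain q where q: "q \<in> S" "R < s * snd q"
    by blast
  define \<sigma> where "\<sigma> = (fst q - (c - b\<^sup>2 / (4 * a))) / (s * snd q - R)"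
  have "c - b\<^sup>2 / (4 * a) \<le> fst q"
    using q(1) subset_convA convA_fst_lower_bound by blast
  with q(2) have "0 \<le> \<sigma>" and \<sigma>q: "fst q - (c - b\<^sup>2 / (4 * a)) = \<sigma> * (s * snd q - R)"
    unfolding \<sigma>_def by simp_all
  obtain M where M: "\<And>p. p \<in> S \<Longrightarrow> M < fst p \<Longrightarrow> m + \<sigma> * (\<bar>snd p\<bar> + R) \<le> fst p"
    using far_points_beyond_cone[OF \<open>0 \<le> \<sigma>\<close>] by blast
  show thesis
  proof (rule that[of "max M (fst q)"])
    fix z p
    assume z: "z \<in> convA S" "fst z \<le> m"
      and p: "p \<in> S" "R < s * snd p" "max M (fst q) < fst p"
    have s_abs: "s * x \<le> \<bar>x\<bar>" for x
      using s by auto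
    have zR: "\<bar>snd z\<bar> \<le> R"
      using R z .
    have p_side: "s * snd z < s * snd p" and q_side: "s * snd z < s * snd q"
      using p(2) q(2) zR s_abs[of "snd z"] by linarith+
    have "\<sigma> * (s * snd p - s * snd z) \<le> \<sigma> * (\<bar>snd p\<bar> + R)"
      using \<open>0 \<le> \<sigma>\<close> s_abs[of "snd p"] s_abs[of "- snd z"] zR by (intro mult_left_mono) auto
    also have "\<dots> \<le> fst p - fst z"
      using M[OF p(1)] p(3) z(2) by simp
    finally have p_cone: "\<sigma> * (s * snd p - s * snd z) \<le> fst p - fst z" .
    have "fst q - fst z \<le> \<sigma> * (s * snd q - R)"
      using \<sigma>q convA_fst_lower_bound[OF z(1)] by linarith
    also have "\<dots> \<le> \<sigma> * (s * snd q - s * snd z)"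
      using \<open>0 \<le> \<sigma>\<close> s_abs[of "snd z"] zR by (intro mult_left_mono) auto
    finally have q_cone: "fst q - fst z \<le> \<sigma> * (s * snd q - s * snd z)" .
    show "witnessed_by {y \<in> S. fst y \<le> max M (fst q)} z p"
      unfolding witnessed_by_def
      using q(1) inner_transfer_across_slope[OF s _ _ p_side p_cone q_side q_cone] by fastforce
  qed
qed

lemma convA_truncation:
  obtains T where "finite T" "T \<subseteq> S" "\<And>z. z \<in> convA S \<Longrightarrow> fst z \<le> m \<Longrightarrow> z \<in> convA T"
proof -
  obtain R where R: "\<And>z. z \<in> convA S \<Longrightarrow> fst z \<le> m \<Longrightarrow> \<bar>snd z\<bar> \<le> R"
    using convA_snd_bounded by blast
  obtain M1 where M1: "\<And>z p. p \<in> S \<Longrightarrow> \<bar>snd p\<bar> \<le> R \<Longrightarrow> M1 < fst p \<Longrightarrow>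
      witnessed_by {y \<in> S. fst y \<le> M1} z p"
    using strip_witnessed by blast
  obtain M2 where M2: "\<And>z p. z \<in> convA S \<Longrightarrow> fst z \<le> m \<Longrightarrow> p \<in> S \<Longrightarrow> R < 1 * snd p \<Longrightarrow>
      M2 < fst p \<Longrightarrow> witnessed_by {y \<in> S. fst y \<le> M2} z p"
    using far_side_witnessed[of 1, OF _ R] by blast
  obtain M3 where M3: "\<And>z p. z \<in> convA S \<Longrightarrow> fst z \<le> m \<Longrightarrow> p \<in> S \<Longrightarrow> R < -1 * snd p \<Longrightarrow>
      M3 < fst p \<Longrightarrow> witnessed_by {y \<in> S. fst y \<le> M3} z p"
    using far_side_witnessed[of "-1", OF _ R] by blast
  define M where "M = max M1 (max M2 M3)"
  have "z \<in> convA {y \<in> S. fst y \<le> M}" if z: "z \<in> convA S" "fst z \<le> m" for z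
  proof (rule mem_convA_if_witnessed[OF finite_sublevel z(1)])
    fix p assume p: "p \<in> S"
    consider "fst p \<le> M" | "\<bar>snd p\<bar> \<le> R" "M < fst p" | "R < 1 * snd p" "M < fst p"
      | "R < -1 * snd p" "M < fst p"
      by linarith
    then show "witnessed_by {y \<in> S. fst y \<le> M} z p"
    proof cases
      case 1
      with p show ?thesis
        by (intro witnessed_by_shifted[of p]) auto
    next
      case 2
      then have "witnessed_by {y \<in> S. fst y \<le> M1} z p"
        by (intro M1[OF p]) (auto simp: M_def)
      then show ?thesis
        by (rule witnessed_by_mono) (auto simp: M_def)
    next
      case 3
      then have "witnessed_by {y \<in> S. fst y \<le> M2} z p"
        by (intro M2[OF z p]) (auto simp: M_def)
      then show ?thesis
        by (rule witnessed_by_mono) (auto simp: M_def)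
    next
      case 4
      then have "witnessed_by {y \<in> S. fst y \<le> M3} z p"
        by (intro M3[OF z p]) (auto simp: M_def)
      then show ?thesis
        by (rule witnessed_by_mono) (auto simp: M_def)
    qed
  qed
  then show thesis
    by (intro that[of "{y \<in> S. fst y \<le> M}"] finite_sublevel) auto
qed

lemma closed_convA: "closed (convA S)"
proof -
  have "closure (convA S) \<subseteq> convA S"
  proof
    fix z assume z: "z \<in> closure (convA S)"
    obtain T where T: "finite T" "T \<subseteq> S" "\<And>w. w \<in> convA S \<Longrightarrow> fst w \<le> fst z + 1 \<Longrightarrow> w \<in> convA T"
      using convA_truncation by blast
    have "open {w :: real \<times> real. fst w < fst z + 1}"
      by (intro open_Collect_less continuous_intros)
    moreover have "z \<in> {w. fst w < fst z + 1} \<inter> closure (convA S)"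
      using z by simp
    ultimately have "z \<in> closure ({w. fst w < fst z + 1} \<inter> convA S)"
      using open_Int_closure_subset by blast
    also have "\<dots> \<subseteq> closure (convA T)"
      using T(3) by (intro closure_mono) auto
    also have "\<dots> = convA T"
      using closed_convA_finite[OF T(1)] by (rule closure_closed)
    also have "\<dots> \<subseteq> convA S"
      using T(2) by (rule convA_mono)
    finally show "z \<in> convA S" .
  qed
  then show ?thesis
    using closure_subset_eq by blast
qed

end

lemma in_RJ_parabolic_support:
  assumes "in_RJ N f"
  obtains a b c where "parabolic_support (supp f) a b c"
proof -
  obtain a b c where a: "0 < a" and parab: "supp f \<subseteq> {(n, r). a * r\<^sup>2 + b * r + c \<le> n}"
    using assms unfolding in_RJ_def by blast
  have N: "0 < N"
    and lattice: "\<forall>p\<in>supp f. \<exists>m k :: int. p = (real_of_int m / real N, real_of_int k / real N)"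
    using assms unfolding in_RJ_def in_R_def by auto
  have "fst ` supp f \<subseteq> {x. \<exists>k::int. x = k / real N}" "snd ` supp f \<subseteq> {x. \<exists>k::int. x = k / real N}"
    using lattice by force+
  then have "finite {x \<in> fst ` supp f. \<bar>x\<bar> \<le> B}" "finite {x \<in> snd ` supp f. \<bar>x\<bar> \<le> B}" for B
    by (blast intro: finite_subset[OF _ finite_bounded_lattice[OF N, of B]])+
  with a parab show thesis
    by (intro that) (unfold_locales, auto)
qed

theorem lemma4p4:
  fixes N :: nat and f :: "real \<times> real \<Rightarrow> complex"
  assumes "in_RJ N f" and "f \<noteq> (\<lambda>_. 0)"
  shows "(\<forall>x. x extreme_point_of (nuJ f) \<longrightarrow> x \<in> supp f)
         \<and> nuJ f = closure (convA (supp f))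
         \<and> closure (convA (supp f)) = convA (supp f)"
proof -
  obtain a b c where "parabolic_support (supp f) a b c"
    using assms(1) by (rule in_RJ_parabolic_support)
  then have "closure (convA (supp f)) = convA (supp f)"
    by (intro closure_closed parabolic_support.closed_convA)
  then show ?thesis
    unfolding nuJ_def using extreme_point_of_convA by auto
qed

end
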